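(* Suppose the collective choice problem $\mathcal C$ satisfies Generic Finite Alternatives. For every $x^0\in X$ and integers $T'>T\ge 1$, \[U_{T'}(x^0)\ge U_T(x^0)\ge U_\infty(x^0).\] Moreover, exactly one of the following holds: (a) there exists $x^0\in X$ such that $U_T(x^0)>U_1(x^0)>U_\infty(x^0)$ for all $T\ge 2$; (b) for all $x^0\in X$ and all $T\ge 2$, $U_T(x^0)=U_1(x^0)=U_\infty(x^0)$.
   Context: Voters $N=\{1,\dots,n\}$ ($n$ odd) and a non-voting agenda setter $A$ choose from a finite policy space $X$; all players have strict (antisymmetric) complete transitive preferences $\succsim_i$ with utilities $u_i$ (Generic Finite Alternatives). $x\succ_M y$: a strict majority of voters strictly prefer $x$ to $y$. $M(x)=\{y: y\succ_M x\text{ or } y=x\}$; $\{\phi(x)\}=\arg\max_{y\in M(x)}u_A(y)$. In the amendment procedure with $T$ rounds (each round the agenda setter proposes a policy voted against the current default by simple majority; passed proposals become the default; the final default is implemented; equilibrium = subgame perfect with as-if-pivotal voting) the implemented policy is unique, equal to $\phi^T(x^0)$, and $U_T(x^0)=u_A(\phi^T(x^0))$ is the agenda setter's equilibrium payoff. A set $Y\subseteq X$ is stable if no distinct $x,y\in Y$ satisfy $y\succ_M x$ and $y\succ_A x$, and every $x\notin Y$ has some $y\in Y$ with $y\succ_M x$ and $y\succ_A x$; in this setting there is a unique stable set $V$. Let $\{\psi(x;V)\}=\arg\max_{y\in M(x)\cap V}u_A(y)$ and $U_\infty(x^0)=u_A(\psi(x^0;V))$; this is the agenda setter's payoff in the infinite-horizon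 game (no deadline; bargaining ends when the agenda setter proposes the current default or a proposal is rejected; the policy at termination is implemented; non-termination is worst for all; solution concept: pure-strategy Markov perfect equilibrium with as-if-pivotal voting). *)

theory Defs
  imports Complex_Main
begin

text \<open>Voters are 1..n, with utilities u i :: 'x \<Rightarrow> real; the agenda setter has utility uA.
  Policy space X is a finite set of alternatives.\<close>

definition maj_pref :: "nat \<Rightarrow> (nat \<Rightarrow> 'x \<Rightarrow> real) \<Rightarrow> 'x \<Rightarrow> 'x \<Rightarrow> bool" where
  "maj_pref n u y x \<longleftrightarrow> 2 * card {i \<in> {1..n}. u i y > u i x} > n"

definition Mset :: "'x set \<Rightarrow> nat \<Rightarrow> (nat \<Rightarrow> 'x \<Rightarrow> real) \<Rightarrow> 'x \<Rightarrow> 'x set" where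
  "Mset X n u x = {y \<in> X. maj_pref n u y x \<or> y = x}"

definition phi :: "'x set \<Rightarrow> nat \<Rightarrow> (nat \<Rightarrow> 'x \<Rightarrow> real) \<Rightarrow> ('x \<Rightarrow> real) \<Rightarrow> 'x \<Rightarrow> 'x" where
  "phi X n u uA x = (THE y. y \<in> Mset X n u x \<and> (\<forall>z \<in> Mset X n u x. uA z \<le> uA y))"

definition U_T :: "'x set \<Rightarrow> nat \<Rightarrow> (nat \<Rightarrow> 'x \<Rightarrow> real) \<Rightarrow> ('x \<Rightarrow> real) \<Rightarrow> nat \<Rightarrow> 'x \<Rightarrow> real" where
  "U_T X n u uA T x0 = uA ((phi X n u uA ^^ T) x0)"

definition stable :: "'x set \<Rightarrow> nat \<Rightarrow> (nat \<Rightarrow> 'x \<Rightarrow> real) \<Rightarrow> ('x \<Rightarrow> real) \<Rightarrow> 'x set \<Rightarrow> bool" where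
  "stable X n u uA Y \<longleftrightarrow> Y \<subseteq> X
     \<and> (\<forall>x \<in> Y. \<forall>y \<in> Y. x \<noteq> y \<longrightarrow> \<not> (maj_pref n u y x \<and> uA y > uA x))
     \<and> (\<forall>x \<in> X - Y. \<exists>y \<in> Y. maj_pref n u y x \<and> uA y > uA x)"

definition stable_set :: "'x set \<Rightarrow> nat \<Rightarrow> (nat \<Rightarrow> 'x \<Rightarrow> real) \<Rightarrow> ('x \<Rightarrow> real) \<Rightarrow> 'x set" where
  "stable_set X n u uA = (THE Y. stable X n u uA Y)"

definition psi :: "'x set \<Rightarrow> nat \<Rightarrow> (nat \<Rightarrow> 'x \<Rightarrow> real) \<Rightarrow> ('x \<Rightarrow> real) \<Rightarrow> 'x set \<Rightarrow> 'x \<Rightarrow> 'x" where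
  "psi X n u uA V x = (THE y. y \<in> Mset X n u x \<inter> V \<and> (\<forall>z \<in> Mset X n u x \<inter> V. uA z \<le> uA y))"

definition U_inf :: "'x set \<Rightarrow> nat \<Rightarrow> (nat \<Rightarrow> 'x \<Rightarrow> real) \<Rightarrow> ('x \<Rightarrow> real) \<Rightarrow> 'x \<Rightarrow> real" where
  "U_inf X n u uA x0 = uA (psi X n u uA (stable_set X n u uA) x0)"

end

theory Submission
  imports Defs
begin

text \<open>Call y \<^emph>\<open>dominating\<close> x when y beats x by majority and the setter prefers y.
  Since \<open>\<phi> x\<close> is the setter's favourite among x and the policies beating x, the setter's
  utility never decreases along \<open>x, \<phi> x, \<phi> (\<phi> x), \<dots>\<close>, and \<open>\<psi> x\<close>, the favourite of the
  same set restricted to the stable set V, is worth at most \<open>\<phi> x\<close>. If \<open>\<phi>\<close> maps X into V,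
  internal stability makes every point of V a fixed point of \<open>\<phi>\<close>, so all iterates and \<open>\<psi>\<close>
  agree with \<open>\<phi>\<close>. Otherwise some \<open>\<phi> x\<close> lies outside V; then \<open>\<psi> x \<noteq> \<phi> x\<close>, and external
  stability provides a policy in V dominating \<open>\<phi> x\<close>, so that \<open>\<phi>\<close> moves \<open>\<phi> x\<close> strictly upwards.\<close>

lemma ex1_argmax_if_inj_on:
  fixes f :: "'a \<Rightarrow> 'b::linorder"
  assumes "finite S" "S \<noteq> {}" "inj_on f S"
  shows "\<exists>!y. y \<in> S \<and> (\<forall>z\<in>S. f z \<le> f y)"
proof -
  have "Max (f ` S) \<in> f ` S"
    using assms(1,2) by simp
  then obtain m where m: "m \<in> S" "f m = Max (f ` S)"
    by auto
  then have "\<forall>z\<in>S. f z \<le> f m"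
    using assms(1) by simp
  moreover have "y = m" if "y \<in> S" "\<forall>z\<in>S. f z \<le> f y" for y
    using that m \<open>\<forall>z\<in>S. f z \<le> f m\<close> assms(3) by (metis inj_onD order_antisym)
  ultimately show ?thesis
    using m(1) by blast
qed

lemma Mset_subset: "Mset X n u x \<subseteq> X"
  unfolding Mset_def by auto

lemma self_in_Mset: "x \<in> X \<Longrightarrow> x \<in> Mset X n u x"
  unfolding Mset_def by auto

lemma stable_subset: "stable X n u uA Y \<Longrightarrow> Y \<subseteq> X"
  unfolding stable_def by blast

lemma stable_no_dominance_inside:
  assumes "stable X n u uA Y" "x \<in> Y" "y \<in> Y" "maj_pref n u y x" "uA x < uA y"
  shows False
  using assms unfolding stable_def by (metis less_irrefl)

lemma stable_dominates_outside:
  assumes "stable X n u uA Y" "x \<in> X" "x \<notin> Y"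
  obtains y where "y \<in> Y" "maj_pref n u y x" "uA x < uA y"
  using assms unfolding stable_def by blast

text \<open>Add the policies in increasing order of uA: the newcomer is the setter's least preferred
  policy so far, so it can be dominated but cannot dominate anything.\<close>

lemma stable_exists:
  assumes "finite X"
  shows "\<exists>Y. stable X n u uA Y"
  using assms
proof (induction rule: finite_ranking_induct[where f = "\<lambda>x. - uA x"])
  case empty
  show ?case
    unfolding stable_def by auto
next
  case (insert m S)
  then obtain Y where Y: "stable S n u uA Y"
    by blast
  have m_minimal: "y \<in> S \<Longrightarrow> uA m \<le> uA y" for y
    using insert.hyps(2) by fastforce
  show ?case
  proof (cases "\<exists>y\<in>Y. maj_pref n u y m \<and> uA m < uA y")
    case True
    then have "stable (insert m S) n u uA Y"
      using Y unfolding stable_def by auto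
    then show ?thesis ..
  next
    case False
    then have "stable (insert m S) n u uA (insert m Y)"
      using Y m_minimal unfolding stable_def by (auto simp: subset_iff not_less)
    then show ?thesis ..
  qed
qed

lemma stable_unique:
  assumes "finite X" and Y1: "stable X n u uA Y1" and Y2: "stable X n u uA Y2"
  shows "Y1 = Y2"
proof -
  have in_other: "x \<in> Yb"
    if Ya: "stable X n u uA Ya" and Yb: "stable X n u uA Yb" and "x \<in> Ya"
      and agree_above: "\<forall>y\<in>X. uA x < uA y \<longrightarrow> (y \<in> Ya \<longleftrightarrow> y \<in> Yb)"
    for Ya Yb x
  proof (rule ccontr)
    assume "x \<notin> Yb"
    moreover have "x \<in> X"
      using stable_subset[OF Ya] \<open>x \<in> Ya\<close> by blast
    ultimately obtain y where y: "y \<in> Yb" "maj_pref n u y x" "uA x < uA y"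
      using stable_dominates_outside[OF Yb] by blast
    then have "y \<in> Ya"
      using stable_subset[OF Yb] agree_above by blast
    from Ya \<open>x \<in> Ya\<close> this y(2,3) show False
      by (rule stable_no_dominance_inside)
  qed
  have "x \<in> Y1 \<longleftrightarrow> x \<in> Y2" if "x \<in> X" for x
    using that
  proof (induction x rule: measure_induct_rule[of "\<lambda>x. card {z\<in>X. uA x < uA z}"])
    case (less x)
    have agree: "y \<in> Y1 \<longleftrightarrow> y \<in> Y2" if "y \<in> X" "uA x < uA y" for y
    proof (rule less.IH[OF _ that(1)])
      have "{z\<in>X. uA y < uA z} \<subset> {z\<in>X. uA x < uA z}"
        using that by auto
      then show "card {z\<in>X. uA y < uA z} < card {z\<in>X. uA x < uA z}"
        using \<open>finite X\<close> by (simp add: psubset_card_mono)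
    qed
    show ?case
      using in_other[OF Y1 Y2, of x] in_other[OF Y2 Y1, of x] agree by blast
  qed
  then show ?thesis
    using stable_subset[OF Y1] stable_subset[OF Y2] by blast
qed

locale agenda_setting =
  fixes X :: "'x set" and n :: nat and u :: "nat \<Rightarrow> 'x \<Rightarrow> real" and uA :: "'x \<Rightarrow> real"
  assumes finite_X: "finite X" and inj_uA: "inj_on uA X"
begin

abbreviation "M \<equiv> Mset X n u"
abbreviation "\<phi> \<equiv> phi X n u uA"
abbreviation "V \<equiv> stable_set X n u uA"
abbreviation "\<psi> \<equiv> psi X n u uA V"

lemma stable_V: "stable X n u uA V"
proof -
  obtain Y where "stable X n u uA Y"
    using stable_exists[OF finite_X] ..
  moreover have "V = Y"
    unfolding stable_set_def using \<open>stable X n u uA Y\<close> stable_unique[OF finite_X _ \<open>stable X n u uA Y\<close>]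
    by (rule the_equality)
  ultimately show ?thesis
    by simp
qed

lemma V_subset: "V \<subseteq> X"
  using stable_V by (rule stable_subset)

lemma eq_if_uA_eq: "x \<in> X \<Longrightarrow> y \<in> X \<Longrightarrow> uA x = uA y \<Longrightarrow> x = y"
  using inj_uA by (rule inj_onD)

lemma argmax_uA:
  assumes "S \<subseteq> X" "S \<noteq> {}"
  shows "(THE y. y \<in> S \<and> (\<forall>z\<in>S. uA z \<le> uA y)) \<in> S
    \<and> (\<forall>z\<in>S. uA z \<le> uA (THE y. y \<in> S \<and> (\<forall>z\<in>S. uA z \<le> uA y)))"
  using finite_subset[OF assms(1) finite_X] assms(2) inj_on_subset[OF inj_uA assms(1)]
  by (rule ex1_argmax_if_inj_on[THEN theI'])

lemma
  assumes "x \<in> X"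
  shows phi_in_Mset: "\<phi> x \<in> M x"
    and phi_maximal: "z \<in> M x \<Longrightarrow> uA z \<le> uA (\<phi> x)"
proof -
  have "M x \<noteq> {}"
    using self_in_Mset[OF assms] by blast
  with Mset_subset have "\<phi> x \<in> M x \<and> (\<forall>z\<in>M x. uA z \<le> uA (\<phi> x))"
    unfolding phi_def by (rule argmax_uA)
  then show "\<phi> x \<in> M x" and "z \<in> M x \<Longrightarrow> uA z \<le> uA (\<phi> x)"
    by blast+
qed

lemma phi_in_X: "x \<in> X \<Longrightarrow> \<phi> x \<in> X"
  by (rule subsetD[OF Mset_subset phi_in_Mset])

lemma uA_le_phi: "x \<in> X \<Longrightarrow> uA x \<le> uA (\<phi> x)"
  by (rule phi_maximal[OF _ self_in_Mset])

lemma phi_dominates_if_moves: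
  assumes "x \<in> X" "\<phi> x \<noteq> x"
  shows "maj_pref n u (\<phi> x) x \<and> uA x < uA (\<phi> x)"
proof -
  have "uA x \<noteq> uA (\<phi> x)"
    using eq_if_uA_eq[OF assms(1) phi_in_X[OF assms(1)]] assms(2) by auto
  then show ?thesis
    using phi_in_Mset[OF assms(1)] uA_le_phi[OF assms(1)] assms(2)
    unfolding Mset_def by auto
qed

lemma Mset_inter_V_nonempty:
  assumes "x \<in> X"
  shows "M x \<inter> V \<noteq> {}"
proof (cases "x \<in> V")
  case True
  then show ?thesis
    using self_in_Mset[OF assms] by blast
next
  case False
  then obtain y where "y \<in> V" "maj_pref n u y x"
    using stable_dominates_outside[OF stable_V assms] by blast
  then have "y \<in> M x \<inter> V"
    using V_subset unfolding Mset_def by blast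
  then show ?thesis
    by blast
qed

lemma
  assumes "x \<in> X"
  shows psi_in_Mset_V: "\<psi> x \<in> M x \<inter> V"
    and psi_maximal: "z \<in> M x \<inter> V \<Longrightarrow> uA z \<le> uA (\<psi> x)"
proof -
  have "M x \<inter> V \<subseteq> X"
    using Mset_subset[of X n u x] by blast
  from this Mset_inter_V_nonempty[OF assms]
  have "\<psi> x \<in> M x \<inter> V \<and> (\<forall>z\<in>M x \<inter> V. uA z \<le> uA (\<psi> x))"
    unfolding psi_def by (rule argmax_uA)
  then show "\<psi> x \<in> M x \<inter> V" and "z \<in> M x \<inter> V \<Longrightarrow> uA z \<le> uA (\<psi> x)"
    by blast+
qed

lemma funpow_phi_in_X: "x \<in> X \<Longrightarrow> (\<phi> ^^ T) x \<in> X"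
  by (induction T) (simp_all add: phi_in_X)

lemma U_T_mono:
  assumes "x \<in> X" "T \<le> T'"
  shows "U_T X n u uA T x \<le> U_T X n u uA T' x"
  using assms(2)
proof (induction T' rule: dec_induct)
  case (step k)
  have "uA ((\<phi> ^^ k) x) \<le> uA ((\<phi> ^^ Suc k) x)"
    using uA_le_phi[OF funpow_phi_in_X[OF assms(1)]] by simp
  with step.IH show ?case
    unfolding U_T_def by linarith
qed simp

lemma U_inf_le_U_1: "x \<in> X \<Longrightarrow> U_inf X n u uA x \<le> U_T X n u uA 1 x"
  unfolding U_inf_def U_T_def using psi_in_Mset_V phi_maximal by simp

lemma U_inf_le_U_T: "x \<in> X \<Longrightarrow> 1 \<le> T \<Longrightarrow> U_inf X n u uA x \<le> U_T X n u uA T x"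
  using U_inf_le_U_1 U_T_mono by (blast intro: order_trans)

lemma phi_fixes_V:
  assumes "y \<in> V" "\<phi> y \<in> V"
  shows "\<phi> y = y"
proof (rule ccontr)
  assume "\<phi> y \<noteq> y"
  moreover have "y \<in> X"
    using assms(1) V_subset by blast
  ultimately have "maj_pref n u (\<phi> y) y \<and> uA y < uA (\<phi> y)"
    by (rule phi_dominates_if_moves[rotated])
  with stable_V assms show False
    by (blast intro: stable_no_dominance_inside)
qed

lemma psi_eq_phi:
  assumes "x \<in> X" "\<phi> x \<in> V"
  shows "\<psi> x = \<phi> x"
proof (rule eq_if_uA_eq)
  have "uA (\<phi> x) \<le> uA (\<psi> x)"
    using psi_maximal[OF assms(1)] phi_in_Mset[OF assms(1)] assms(2) by blast
  moreover have "uA (\<psi> x) \<le> uA (\<phi> x)"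
    using phi_maximal[OF assms(1)] psi_in_Mset_V[OF assms(1)] by blast
  ultimately show "uA (\<psi> x) = uA (\<phi> x)"
    by (rule order_antisym[rotated])
qed (use psi_in_Mset_V[OF assms(1)] V_subset phi_in_X[OF assms(1)] in auto)

lemma funpow_phi_eq_phi:
  assumes "\<phi> ` X \<subseteq> V" "x \<in> X" "1 \<le> T"
  shows "(\<phi> ^^ T) x = \<phi> x"
  using assms(3)
proof (induction T rule: dec_induct)
  case (step k)
  have "\<phi> x \<in> V" "\<phi> (\<phi> x) \<in> V"
    using assms(1) assms(2) phi_in_X[OF assms(2)] by blast+
  then have "\<phi> (\<phi> x) = \<phi> x"
    by (rule phi_fixes_V)
  with step.IH show ?case
    by simp
qed simp

lemma U_constant_if_phi_into_V:
  assumes "\<phi> ` X \<subseteq> V" "x \<in> X" "1 \<le> T"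
  shows "U_T X n u uA T x = U_T X n u uA 1 x \<and> U_T X n u uA 1 x = U_inf X n u uA x"
proof -
  have "\<phi> x \<in> V"
    using assms(1,2) by blast
  then show ?thesis
    using funpow_phi_eq_phi[OF assms] psi_eq_phi[OF assms(2)]
    unfolding U_T_def U_inf_def by simp
qed

lemma U_inf_less_U_1:
  assumes "x \<in> X" "\<phi> x \<notin> V"
  shows "U_inf X n u uA x < U_T X n u uA 1 x"
proof -
  have "\<psi> x \<noteq> \<phi> x"
    using psi_in_Mset_V[OF assms(1)] assms(2) by auto
  then have "uA (\<psi> x) \<noteq> uA (\<phi> x)"
    using psi_in_Mset_V[OF assms(1)] V_subset phi_in_X[OF assms(1)] eq_if_uA_eq by blast
  then show ?thesis
    using U_inf_le_U_1[OF assms(1)] unfolding U_inf_def U_T_def by simp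
qed

lemma phi_moves_outside_V:
  assumes "y \<in> X" "y \<notin> V"
  shows "\<phi> y \<noteq> y"
proof
  assume "\<phi> y = y"
  obtain w where "w \<in> V" "maj_pref n u w y" "uA y < uA w"
    using stable_dominates_outside[OF stable_V assms] .
  then have "uA w \<le> uA (\<phi> y)"
    using phi_maximal[OF assms(1)] V_subset unfolding Mset_def by blast
  with \<open>\<phi> y = y\<close> \<open>uA y < uA w\<close> show False
    by simp
qed

lemma U_1_less_U_T:
  assumes "x \<in> X" "\<phi> x \<notin> V" "2 \<le> T"
  shows "U_T X n u uA 1 x < U_T X n u uA T x"
proof -
  have "uA (\<phi> x) < uA (\<phi> (\<phi> x))"
    using phi_dominates_if_moves phi_moves_outside_V phi_in_X assms(1,2) by blast
  then have "U_T X n u uA 1 x < U_T X n u uA 2 x"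
    unfolding U_T_def by (simp add: numeral_2_eq_2)
  also have "\<dots> \<le> U_T X n u uA T x"
    using U_T_mono assms(1,3) .
  finally show ?thesis .
qed

lemma U_dichotomy:
  "(\<exists>x0 \<in> X. \<forall>T \<ge> 2. U_T X n u uA T x0 > U_T X n u uA 1 x0
                        \<and> U_T X n u uA 1 x0 > U_inf X n u uA x0)
   \<or> (\<forall>x0 \<in> X. \<forall>T \<ge> 2. U_T X n u uA T x0 = U_T X n u uA 1 x0
                        \<and> U_T X n u uA 1 x0 = U_inf X n u uA x0)"
proof (cases "\<phi> ` X \<subseteq> V")
  case True
  have "\<forall>x0 \<in> X. \<forall>T \<ge> 2. U_T X n u uA T x0 = U_T X n u uA 1 x0
                        \<and> U_T X n u uA 1 x0 = U_inf X n u uA x0"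
    by (intro ballI allI impI U_constant_if_phi_into_V[OF True]) simp_all
  then show ?thesis ..
next
  case False
  then obtain x where "x \<in> X" "\<phi> x \<notin> V"
    by blast
  then have "\<forall>T \<ge> 2. U_T X n u uA T x > U_T X n u uA 1 x \<and> U_T X n u uA 1 x > U_inf X n u uA x"
    using U_1_less_U_T U_inf_less_U_1 by blast
  with \<open>x \<in> X\<close> show ?thesis
    by blast
qed

end

theorem theorem8:
  fixes X :: "'x set" and n :: nat and u :: "nat \<Rightarrow> 'x \<Rightarrow> real" and uA :: "'x \<Rightarrow> real"
  assumes finX: "finite X"
    and odd_n: "odd n"
    and strict_voters: "\<And>i. i \<in> {1..n} \<Longrightarrow> inj_on (u i) X"
    and strict_setter: "inj_on uA X"
  shows "(\<forall>x0 \<in> X. \<forall>T T'. 1 \<le> T \<and> T < T' \<longrightarrow>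
            U_T X n u uA T' x0 \<ge> U_T X n u uA T x0 \<and> U_T X n u uA T x0 \<ge> U_inf X n u uA x0)
     \<and> (let A = (\<exists>x0 \<in> X. \<forall>T \<ge> 2. U_T X n u uA T x0 > U_T X n u uA 1 x0
                                   \<and> U_T X n u uA 1 x0 > U_inf X n u uA x0);
            B = (\<forall>x0 \<in> X. \<forall>T \<ge> 2. U_T X n u uA T x0 = U_T X n u uA 1 x0
                                   \<and> U_T X n u uA 1 x0 = U_inf X n u uA x0)
        in (A \<and> \<not> B) \<or> (\<not> A \<and> B))"
proof -
  interpret agenda_setting X n u uA
    using finX strict_setter by unfold_locales
  define A where "A \<longleftrightarrow> (\<exists>x0 \<in> X. \<forall>T \<ge> 2. U_T X n u uA T x0 > U_T X n u uA 1 x0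
                                   \<and> U_T X n u uA 1 x0 > U_inf X n u uA x0)"
  define B where "B \<longleftrightarrow> (\<forall>x0 \<in> X. \<forall>T \<ge> 2. U_T X n u uA T x0 = U_T X n u uA 1 x0
                                   \<and> U_T X n u uA 1 x0 = U_inf X n u uA x0)"
  have "A \<or> B"
    unfolding A_def B_def by (rule U_dichotomy)
  moreover have "\<not> (A \<and> B)"
  proof
    assume "A \<and> B"
    then obtain x0 where "U_T X n u uA 2 x0 > U_T X n u uA 1 x0" "U_T X n u uA 2 x0 = U_T X n u uA 1 x0"
      unfolding A_def B_def by (meson order_refl)
    then show False
      by simp
  qed
  ultimately show ?thesis
    using U_T_mono U_inf_le_U_T less_imp_le
    unfolding Let_def A_def[symmetric] B_def[symmetric] by blast
qed

end
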